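(* Consider the five-node network with $\mathcal N=\{1,2,3,4,5\}$, $\mathcal E=\{(3,4),(2,4),(4,5),(1,5)\}$, observing nodes $\mathcal J=\{1,2,3\}$ and decision node $5$, and take the time-sharing variable $Q$ constant. For random variables with joint law $P_{X_1,X_2,X_3,Y}P_{U_1|X_1}P_{U_2|X_2}P_{U_3|X_3}$ (finite alphabets), the following are equivalent for a pair $(\Delta,C_{\rm sum})\in\mathbb R_+^2$: (i) $\Delta\le I(Y;U_1,U_2,U_3)$ and there exist $C_{15},C_{24},C_{34},C_{45}\ge0$ with $C_{15}+C_{24}+C_{34}+C_{45}=C_{\rm sum}$ and $R_1,R_2,R_3\ge0$ such that $C_{15}\ge R_1$, $C_{24}\ge R_2$, $C_{34}\ge R_3$, $C_{45}\ge R_2+R_3$, $R_1\ge I(U_1;X_1|U_2,U_3)$, $R_2\ge I(U_2;X_2|U_1,U_3)$, $R_3\ge I(U_3;X_3|U_1,U_2)$, $R_2+R_3\ge I(X_2,X_3;U_2,U_3|U_1)$, $R_1+R_3\ge I(X_1,X_3;U_1,U_3|U_2)$, $R_1+R_2\ge I(X_1,X_2;U_1,U_2|U_3)$, $R_1+R_2+R_3\ge I(X_1,X_2,X_3;U_1,U_2,U_3)$; (ii) $\Delta\le I(Y;U_1,U_2,U_3)$ and $C_{\rm sum}\ge I(X_1,X_2,X_3;U_1,U_2,U_3)+I(X_2,X_3;U_2,U_3|U_1)$. Consequently the region $\mathcal{RI}_{\rm sum}$ equals the union over all conditionals $P_{U_1|X_1},P_{U_2|X_2},P_{U_3|X_3}$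 of the pairs satisfying (ii).
   Context: $\mathcal{RI}_{\rm sum}$ denotes the set of pairs $(\Delta,C_{\rm sum})\in\mathbb R_+^2$ for which, for some conditionals $P_{U_1|X_1},P_{U_2|X_2},P_{U_3|X_3}$, condition (i) holds (this is the set of pairs for which the relevance given by the achievability result for general networks is attainable with some edge capacities of total sum $C_{\rm sum}$). All mutual informations are computed under the joint law $P_{X_1,X_2,X_3,Y}P_{U_1|X_1}P_{U_2|X_2}P_{U_3|X_3}$. *)

theory Defs
  imports Complex_Main
begin

definition prob_of :: "('w::finite \<Rightarrow> real) \<Rightarrow> ('w \<Rightarrow> 'v) \<Rightarrow> 'v \<Rightarrow> real" where
  "prob_of P f v = (\<Sum>w\<in>{w. f w = v}. P w)"

definition entropy :: "('w::finite \<Rightarrow> real) \<Rightarrow> ('w \<Rightarrow> 'v) \<Rightarrow> real" where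
  "entropy P f = - (\<Sum>v\<in>range f. prob_of P f v * log 2 (prob_of P f v))"

definition cond_mi :: "('w::finite \<Rightarrow> real) \<Rightarrow> ('w \<Rightarrow> 'a) \<Rightarrow> ('w \<Rightarrow> 'b) \<Rightarrow> ('w \<Rightarrow> 'c) \<Rightarrow> real" where
  "cond_mi P A B C = entropy P (\<lambda>w. (A w, C w)) + entropy P (\<lambda>w. (B w, C w))
      - entropy P (\<lambda>w. (A w, B w, C w)) - entropy P C"

definition mi :: "('w::finite \<Rightarrow> real) \<Rightarrow> ('w \<Rightarrow> 'a) \<Rightarrow> ('w \<Rightarrow> 'b) \<Rightarrow> real" where
  "mi P A B = cond_mi P A B (\<lambda>_. ())"

definition is_pmf :: "('w::finite \<Rightarrow> real) \<Rightarrow> bool" where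
  "is_pmf P \<longleftrightarrow> (\<forall>w. 0 \<le> P w) \<and> sum P UNIV = 1"

definition is_channel :: "('x \<Rightarrow> 'u::finite \<Rightarrow> real) \<Rightarrow> bool" where
  "is_channel q \<longleftrightarrow> (\<forall>x. (\<forall>u. 0 \<le> q x u) \<and> sum (q x) UNIV = 1)"

type_synonym ('x1,'x2,'x3,'y,'u1,'u2,'u3) omega = "('x1 \<times> 'x2 \<times> 'x3 \<times> 'y) \<times> ('u1 \<times> 'u2 \<times> 'u3)"

definition jointP ::
  "('x1 \<times> 'x2 \<times> 'x3 \<times> 'y \<Rightarrow> real) \<Rightarrow> ('x1 \<Rightarrow> 'u1 \<Rightarrow> real) \<Rightarrow> ('x2 \<Rightarrow> 'u2 \<Rightarrow> real)
    \<Rightarrow> ('x3 \<Rightarrow> 'u3 \<Rightarrow> real) \<Rightarrow> ('x1,'x2,'x3,'y,'u1,'u2,'u3) omega \<Rightarrow> real" where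
  "jointP p q1 q2 q3 w = (case w of ((x1,x2,x3,y),(u1,u2,u3)) \<Rightarrow>
      p (x1,x2,x3,y) * q1 x1 u1 * q2 x2 u2 * q3 x3 u3)"

definition X1 :: "('x1,'x2,'x3,'y,'u1,'u2,'u3) omega \<Rightarrow> 'x1" where "X1 w = fst (fst w)"
definition X2 :: "('x1,'x2,'x3,'y,'u1,'u2,'u3) omega \<Rightarrow> 'x2" where "X2 w = fst (snd (fst w))"
definition X3 :: "('x1,'x2,'x3,'y,'u1,'u2,'u3) omega \<Rightarrow> 'x3" where "X3 w = fst (snd (snd (fst w)))"
definition Yv :: "('x1,'x2,'x3,'y,'u1,'u2,'u3) omega \<Rightarrow> 'y" where "Yv w = snd (snd (snd (fst w)))"
definition U1 :: "('x1,'x2,'x3,'y,'u1,'u2,'u3) omega \<Rightarrow> 'u1" where "U1 w = fst (snd w)"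
definition U2 :: "('x1,'x2,'x3,'y,'u1,'u2,'u3) omega \<Rightarrow> 'u2" where "U2 w = fst (snd (snd w))"
definition U3 :: "('x1,'x2,'x3,'y,'u1,'u2,'u3) omega \<Rightarrow> 'u3" where "U3 w = snd (snd (snd w))"

definition cond_i ::
  "(('x1::finite,'x2::finite,'x3::finite,'y::finite,'u1::finite,'u2::finite,'u3::finite) omega \<Rightarrow> real) \<Rightarrow> real \<Rightarrow> real \<Rightarrow> bool" where
  "cond_i P \<Delta> Csum \<longleftrightarrow>
     \<Delta> \<le> mi P Yv (\<lambda>w. (U1 w, U2 w, U3 w)) \<and>
     (\<exists>C15 C24 C34 C45 R1 R2 R3 :: real.
        0 \<le> C15 \<and> 0 \<le> C24 \<and> 0 \<le> C34 \<and> 0 \<le> C45 \<and>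
        C15 + C24 + C34 + C45 = Csum \<and>
        0 \<le> R1 \<and> 0 \<le> R2 \<and> 0 \<le> R3 \<and>
        C15 \<ge> R1 \<and> C24 \<ge> R2 \<and> C34 \<ge> R3 \<and> C45 \<ge> R2 + R3 \<and>
        R1 \<ge> cond_mi P U1 X1 (\<lambda>w. (U2 w, U3 w)) \<and>
        R2 \<ge> cond_mi P U2 X2 (\<lambda>w. (U1 w, U3 w)) \<and>
        R3 \<ge> cond_mi P U3 X3 (\<lambda>w. (U1 w, U2 w)) \<and>
        R2 + R3 \<ge> cond_mi P (\<lambda>w. (X2 w, X3 w)) (\<lambda>w. (U2 w, U3 w)) U1 \<and>
        R1 + R3 \<ge> cond_mi P (\<lambda>w. (X1 w, X3 w)) (\<lambda>w. (U1 w, U3 w)) U2 \<and>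
        R1 + R2 \<ge> cond_mi P (\<lambda>w. (X1 w, X2 w)) (\<lambda>w. (U1 w, U2 w)) U3 \<and>
        R1 + R2 + R3 \<ge> mi P (\<lambda>w. (X1 w, X2 w, X3 w)) (\<lambda>w. (U1 w, U2 w, U3 w)))"

definition cond_ii ::
  "(('x1::finite,'x2::finite,'x3::finite,'y::finite,'u1::finite,'u2::finite,'u3::finite) omega \<Rightarrow> real) \<Rightarrow> real \<Rightarrow> real \<Rightarrow> bool" where
  "cond_ii P \<Delta> Csum \<longleftrightarrow>
     \<Delta> \<le> mi P Yv (\<lambda>w. (U1 w, U2 w, U3 w)) \<and>
     Csum \<ge> mi P (\<lambda>w. (X1 w, X2 w, X3 w)) (\<lambda>w. (U1 w, U2 w, U3 w))
            + cond_mi P (\<lambda>w. (X2 w, X3 w)) (\<lambda>w. (U2 w, U3 w)) U1"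

text \<open>RI_sum for a fixed source law p and fixed (finite) auxiliary alphabets 'u1,'u2,'u3.\<close>
definition RI_sum ::
  "('x1::finite \<times> 'x2::finite \<times> 'x3::finite \<times> 'y::finite \<Rightarrow> real) \<Rightarrow>
   'u1::finite itself \<Rightarrow> 'u2::finite itself \<Rightarrow> 'u3::finite itself \<Rightarrow> (real \<times> real) set" where
  "RI_sum p _ _ _ = {(\<Delta>, Csum). 0 \<le> \<Delta> \<and> 0 \<le> Csum \<and>
      (\<exists>(q1::'x1 \<Rightarrow> 'u1 \<Rightarrow> real) (q2::'x2 \<Rightarrow> 'u2 \<Rightarrow> real) (q3::'x3 \<Rightarrow> 'u3 \<Rightarrow> real).
         is_channel q1 \<and> is_channel q2 \<and> is_channel q3 \<and> cond_i (jointP p q1 q2 q3) \<Delta> Csum)}"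

end

theory Submission
  imports Defs
begin

text \<open>Condition (ii) is condition (i) with the rates and edge capacities eliminated. Since
  U_i is produced from X_i alone, adjoining U_i to a tuple of variables that contains X_i but
  not U_i raises its entropy by exactly H(U_i|X_i). Hence every information quantity in (i) is
  an entropy of U-variables minus channel entropies. With B = I(X2,X3;U2,U3|U1), the choice
  R1 = I(X;U) - B, R2 = I(U2;X2|U1,U3), R3 = B - R2, C45 = B, C15 = Csum - 2B then meets every
  constraint of (i), the slack in each being one of I(U1;U2,U3), I(U2;U3|U1), I(U1,U3;U2),
  I(U1;U3), all nonnegative. Conversely, summing the constraints of (i) gives
  Csum \<ge> R1 + 2(R2 + R3) \<ge> I(X;U) + B.\<close>

section \<open>Entropy on a finite sample space\<close>

definition point_prob :: "('w::finite \<Rightarrow> real) \<Rightarrow> ('w \<Rightarrow> 'v) \<Rightarrow> 'w \<Rightarrow> real" where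
  "point_prob P f w = prob_of P f (f w)"

lemma prob_of_eq_sum_if: "prob_of P f v = (\<Sum>w\<in>UNIV. if f w = v then P w else 0)"
  unfolding prob_of_def by (simp add: sum.If_cases)

lemma entropy_eq_sum_point_prob:
  fixes P :: "'w::finite \<Rightarrow> real"
  shows "entropy P f = - (\<Sum>w\<in>UNIV. P w * log 2 (point_prob P f w))"
proof -
  have "(\<Sum>w\<in>UNIV. P w * log 2 (point_prob P f w))
      = (\<Sum>v\<in>range f. \<Sum>w\<in>{x. x \<in> UNIV \<and> f x = v}. P w * log 2 (point_prob P f w))"
    by (rule sum.image_gen) simp
  also have "\<dots> = (\<Sum>v\<in>range f. \<Sum>w\<in>{w. f w = v}. P w * log 2 (prob_of P f v))"
    by (intro sum.cong) (auto simp: point_prob_def)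
  also have "\<dots> = (\<Sum>v\<in>range f. prob_of P f v * log 2 (prob_of P f v))"
    by (simp add: prob_of_def sum_distrib_right)
  finally show ?thesis unfolding entropy_def by simp
qed

lemma point_prob_ge:
  fixes P :: "'w::finite \<Rightarrow> real"
  assumes "\<And>w. 0 \<le> P w"
  shows "P w \<le> point_prob P f w"
  unfolding point_prob_def prob_of_def
  using sum_mono2[of "{x. f x = f w}" "{w}" P] assms by auto

lemma point_prob_nonneg:
  fixes P :: "'w::finite \<Rightarrow> real"
  assumes "\<And>w. 0 \<le> P w"
  shows "0 \<le> point_prob P f w"
  unfolding point_prob_def prob_of_def using assms by (simp add: sum_nonneg)

lemma entropy_cong:
  fixes P :: "'w::finite \<Rightarrow> real"
  assumes "\<And>w w'. f w = f w' \<longleftrightarrow> g w = g w'"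
  shows "entropy P f = entropy P g"
  using assms by (simp add: entropy_eq_sum_point_prob point_prob_def prob_of_def)

lemma entropy_const:
  assumes "is_pmf P"
  shows "entropy P (\<lambda>_. c) = 0"
  using assms by (simp add: entropy_def prob_of_def is_pmf_def)

lemma mi_eq_entropy:
  assumes "is_pmf P"
  shows "mi P A B = entropy P A + entropy P B - entropy P (\<lambda>w. (A w, B w))"
proof -
  have "entropy P (\<lambda>w. (A w, ())) = entropy P A" "entropy P (\<lambda>w. (B w, ())) = entropy P B"
    "entropy P (\<lambda>w. (A w, B w, ())) = entropy P (\<lambda>w. (A w, B w))"
    by (rule entropy_cong; simp)+
  then show ?thesis by (simp add: mi_def cond_mi_def entropy_const[OF assms])
qed

lemma entropy_bij_reindex:
  fixes P :: "'w::finite \<Rightarrow> real" and \<beta> :: "'z::finite \<Rightarrow> 'w"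
  assumes "bij \<beta>"
  shows "entropy (\<lambda>z. P (\<beta> z)) (\<lambda>z. f (\<beta> z)) = entropy P f"
proof -
  have "point_prob (\<lambda>z. P (\<beta> z)) (\<lambda>z. f (\<beta> z)) z = point_prob P f (\<beta> z)" for z
  proof -
    have "bij_betw \<beta> {z'. f (\<beta> z') = f (\<beta> z)} {w. f w = f (\<beta> z)}"
      using assms by (auto simp: bij_def bij_betw_def intro: inj_on_subset)
    then show ?thesis by (simp add: point_prob_def prob_of_def sum.reindex_bij_betw)
  qed
  then show ?thesis
    using sum.reindex_bij_betw[OF assms, of "\<lambda>w. P w * log 2 (point_prob P f w)"]
    by (simp add: entropy_eq_sum_point_prob)
qed

lemma sum_times_log_le_zero:
  fixes P \<rho> :: "'w::finite \<Rightarrow> real"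
  assumes nonneg: "\<And>w. 0 \<le> P w" and pos: "\<And>w. 0 < P w \<Longrightarrow> 0 < \<rho> w"
    and mass: "(\<Sum>w\<in>UNIV. P w * \<rho> w) \<le> sum P UNIV"
  shows "(\<Sum>w\<in>UNIV. P w * log 2 (\<rho> w)) \<le> 0"
proof -
  have "P w * log 2 (\<rho> w) \<le> P w * (\<rho> w - 1) / ln 2" for w
  proof (cases "P w = 0")
    case False
    with nonneg have "0 < P w" by (simp add: order_le_neq_trans)
    with pos have "log 2 (\<rho> w) \<le> (\<rho> w - 1) / ln 2"
      by (simp add: log_def divide_right_mono ln_le_minus_one)
    with \<open>0 < P w\<close> show ?thesis
      using mult_left_mono[of "log 2 (\<rho> w)" "(\<rho> w - 1) / ln 2" "P w"] by simp
  qed simp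
  then have "(\<Sum>w\<in>UNIV. P w * log 2 (\<rho> w)) \<le> (\<Sum>w\<in>UNIV. P w * (\<rho> w - 1) / ln 2)"
    by (rule sum_mono)
  also have "\<dots> = ((\<Sum>w\<in>UNIV. P w * \<rho> w) - sum P UNIV) / ln 2"
    by (simp add: sum_divide_distrib[symmetric] sum_subtractf right_diff_distrib)
  also have "\<dots> \<le> 0"
    using mass by (simp add: divide_nonpos_pos)
  finally show ?thesis .
qed

lemma sum_fiber_pair_le:
  fixes P :: "'w::finite \<Rightarrow> real" and A :: "'w \<Rightarrow> 'a" and B :: "'w \<Rightarrow> 'b" and C :: "'w \<Rightarrow> 'c"
  assumes nonneg: "\<And>w. 0 \<le> P w"
  defines "abc \<equiv> \<lambda>w. (A w, B w, C w)"
  shows "(\<Sum>w\<in>UNIV. if (A w, C w) = (A x, C x) \<and> (B w, C w) = (B y, C y)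
            then P w / (point_prob P abc w * point_prob P C w) else 0)
         \<le> (if C y = C x then 1 / point_prob P C x else 0)"
proof (cases "C y = C x")
  case True
  define v where "v = (A x, B y, C x)"
  define m where "m = prob_of P abc v"
  have "(\<Sum>w\<in>UNIV. if (A w, C w) = (A x, C x) \<and> (B w, C w) = (B y, C y)
            then P w / (point_prob P abc w * point_prob P C w) else 0)
      = (\<Sum>w\<in>UNIV. if abc w = v then P w / (m * point_prob P C x) else 0)"
    using True by (intro sum.cong refl) (auto simp: abc_def v_def m_def point_prob_def)
  also have "\<dots> = (\<Sum>w\<in>UNIV. if abc w = v then P w else 0) / (m * point_prob P C x)"
    by (simp add: sum_divide_distrib) (intro sum.cong refl, simp)
  also have "\<dots> = (m / m) / point_prob P C x"
    by (simp add: m_def prob_of_eq_sum_if)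
  also have "\<dots> \<le> 1 / point_prob P C x"
    using point_prob_nonneg[OF nonneg, where f = C and w = x]
    by (intro divide_right_mono) (auto simp: divide_le_eq_1)
  finally show ?thesis using True by simp
next
  case False
  then have "(\<Sum>w\<in>UNIV. if (A w, C w) = (A x, C x) \<and> (B w, C w) = (B y, C y)
            then P w / (point_prob P abc w * point_prob P C w) else 0) = 0"
    by (intro sum.neutral) auto
  with False show ?thesis by simp
qed

lemma sum_cond_independence_ratio_le:
  fixes P :: "'w::finite \<Rightarrow> real" and A :: "'w \<Rightarrow> 'a" and B :: "'w \<Rightarrow> 'b" and C :: "'w \<Rightarrow> 'c"
  assumes nonneg: "\<And>w. 0 \<le> P w"
  defines "abc \<equiv> \<lambda>w. (A w, B w, C w)" and "ac \<equiv> \<lambda>w. (A w, C w)" and "bc \<equiv> \<lambda>w. (B w, C w)"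
  shows "(\<Sum>w\<in>UNIV. P w * (point_prob P ac w * point_prob P bc w
            / (point_prob P abc w * point_prob P C w))) \<le> sum P UNIV"
proof -
  define D where "D w = P w / (point_prob P abc w * point_prob P C w)" for w
  define fiber where
    "fiber w1 w2 = (\<Sum>w\<in>UNIV. if ac w = ac w1 \<and> bc w = bc w2 then D w else 0)" for w1 w2
  have "P w * (point_prob P ac w * point_prob P bc w / (point_prob P abc w * point_prob P C w))
      = (\<Sum>w1\<in>UNIV. \<Sum>w2\<in>UNIV.
           P w1 * P w2 * (if ac w = ac w1 \<and> bc w = bc w2 then D w else 0))" for w
  proof -
    have "P w * (point_prob P ac w * point_prob P bc w / (point_prob P abc w * point_prob P C w))
        = D w * ((\<Sum>w1\<in>UNIV. if ac w1 = ac w then P w1 else 0)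
            * (\<Sum>w2\<in>UNIV. if bc w2 = bc w then P w2 else 0))"
      by (simp add: D_def point_prob_def prob_of_eq_sum_if)
    also have "\<dots> = (\<Sum>w1\<in>UNIV. \<Sum>w2\<in>UNIV.
        D w * ((if ac w1 = ac w then P w1 else 0) * (if bc w2 = bc w then P w2 else 0)))"
      by (subst sum_product) (simp only: sum_distrib_left)
    also have "\<dots> = (\<Sum>w1\<in>UNIV. \<Sum>w2\<in>UNIV.
        P w1 * P w2 * (if ac w = ac w1 \<and> bc w = bc w2 then D w else 0))"
      by (intro sum.cong refl) auto
    finally show ?thesis .
  qed
  then have "(\<Sum>w\<in>UNIV. P w * (point_prob P ac w * point_prob P bc w
        / (point_prob P abc w * point_prob P C w)))
      = (\<Sum>w1\<in>UNIV. \<Sum>w2\<in>UNIV. P w1 * P w2 * fiber w1 w2)"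
    by (simp add: fiber_def sum_distrib_left) (subst sum.swap, subst (2) sum.swap, rule refl)
  also have "\<dots> \<le> (\<Sum>w1\<in>UNIV. \<Sum>w2\<in>UNIV.
      P w1 * P w2 * (if C w2 = C w1 then 1 / point_prob P C w1 else 0))"
  proof (intro sum_mono mult_left_mono)
    show "fiber w1 w2 \<le> (if C w2 = C w1 then 1 / point_prob P C w1 else 0)" for w1 w2
      using sum_fiber_pair_le[where P = P and A = A and B = B and C = C and x = w1 and y = w2] nonneg
      unfolding fiber_def D_def abc_def ac_def bc_def by blast
  qed (simp add: nonneg)
  also have "\<dots> = (\<Sum>w1\<in>UNIV. P w1 * (point_prob P C w1 / point_prob P C w1))"
  proof (intro sum.cong refl)
    fix w1
    have "(\<Sum>w2\<in>UNIV. P w1 * P w2 * (if C w2 = C w1 then 1 / point_prob P C w1 else 0))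
        = P w1 / point_prob P C w1 * (\<Sum>w2\<in>UNIV. if C w2 = C w1 then P w2 else 0)"
      by (simp add: sum_distrib_left) (intro sum.cong refl, simp)
    then show "(\<Sum>w2\<in>UNIV. P w1 * P w2 * (if C w2 = C w1 then 1 / point_prob P C w1 else 0))
        = P w1 * (point_prob P C w1 / point_prob P C w1)"
      by (simp add: point_prob_def prob_of_eq_sum_if)
  qed
  also have "\<dots> \<le> sum P UNIV"
    using nonneg by (intro sum_mono) (simp add: mult_left_le)
  finally show ?thesis .
qed

lemma cond_mi_nonneg:
  fixes P :: "'w::finite \<Rightarrow> real" and A :: "'w \<Rightarrow> 'a" and B :: "'w \<Rightarrow> 'b" and C :: "'w \<Rightarrow> 'c"
  assumes nonneg: "\<And>w. 0 \<le> P w"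
  shows "0 \<le> cond_mi P A B C"
proof -
  let ?abc = "\<lambda>w. (A w, B w, C w)" and ?ac = "\<lambda>w. (A w, C w)" and ?bc = "\<lambda>w. (B w, C w)"
  define \<rho> where
    "\<rho> w = point_prob P ?ac w * point_prob P ?bc w / (point_prob P ?abc w * point_prob P C w)" for w
  have pos: "0 < point_prob P ?ac w \<and> 0 < point_prob P ?bc w \<and> 0 < point_prob P ?abc w
      \<and> 0 < point_prob P C w" if "0 < P w" for w
    by (intro conjI order_less_le_trans[OF that point_prob_ge[where P = P, OF nonneg]])
  have pointwise: "P w * log 2 (\<rho> w) = P w * (log 2 (point_prob P ?ac w) + log 2 (point_prob P ?bc w)
      - log 2 (point_prob P ?abc w) - log 2 (point_prob P C w))" for w
  proof (cases "P w = 0")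
    case False
    with nonneg have "0 < P w" by (simp add: order_le_neq_trans)
    with pos[OF this] show ?thesis by (simp add: \<rho>_def log_divide log_mult)
  qed simp
  have "cond_mi P A B C = - (\<Sum>w\<in>UNIV. P w * (log 2 (point_prob P ?ac w)
      + log 2 (point_prob P ?bc w) - log 2 (point_prob P ?abc w) - log 2 (point_prob P C w)))"
    by (simp add: cond_mi_def entropy_eq_sum_point_prob right_diff_distrib distrib_left
        sum_subtractf sum.distrib)
  then have "cond_mi P A B C = - (\<Sum>w\<in>UNIV. P w * log 2 (\<rho> w))"
    by (simp only: pointwise)
  moreover have "(\<Sum>w\<in>UNIV. P w * log 2 (\<rho> w)) \<le> 0"
  proof (rule sum_times_log_le_zero[OF nonneg])
    show "0 < \<rho> w" if "0 < P w" for w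
      using pos[OF that] by (simp add: \<rho>_def)
    show "(\<Sum>w\<in>UNIV. P w * \<rho> w) \<le> sum P UNIV"
      unfolding \<rho>_def by (rule sum_cond_independence_ratio_le[OF nonneg])
  qed
  ultimately show ?thesis by simp
qed

section \<open>Adjoining the output of a channel\<close>

lemma prob_of_channel_input:
  fixes r :: "'a::finite \<Rightarrow> real" and q :: "'x \<Rightarrow> 'b::finite \<Rightarrow> real"
  assumes "is_channel q"
  shows "prob_of (\<lambda>z. r (fst z) * q (X (fst z)) (snd z)) (\<lambda>z. F (fst z)) v = (\<Sum>a | F a = v. r a)"
proof -
  have "{z :: 'a \<times> 'b. F (fst z) = v} = {a. F a = v} \<times> UNIV" by auto
  then have "prob_of (\<lambda>z. r (fst z) * q (X (fst z)) (snd z)) (\<lambda>z. F (fst z)) v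
      = (\<Sum>a | F a = v. \<Sum>b\<in>UNIV. r a * q (X a) b)"
    unfolding prob_of_def sum.cartesian_product by (simp add: split_beta)
  also have "\<dots> = (\<Sum>a | F a = v. r a * sum (q (X a)) UNIV)"
    by (simp add: sum_distrib_left)
  finally show ?thesis using assms by (simp add: is_channel_def)
qed

lemma prob_of_channel_input_output:
  fixes r :: "'a::finite \<Rightarrow> real" and q :: "'x \<Rightarrow> 'b::finite \<Rightarrow> real"
  assumes "\<And>a a'. F a = F a' \<Longrightarrow> X a = X a'"
  shows "prob_of (\<lambda>z. r (fst z) * q (X (fst z)) (snd z)) (\<lambda>z. (F (fst z), snd z)) (F a0, b0)
       = q (X a0) b0 * (\<Sum>a | F a = F a0. r a)"
proof -
  have "{z :: 'a \<times> 'b. (F (fst z), snd z) = (F a0, b0)} = {a. F a = F a0} \<times> {b0}" by auto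
  then have "prob_of (\<lambda>z. r (fst z) * q (X (fst z)) (snd z)) (\<lambda>z. (F (fst z), snd z)) (F a0, b0)
      = (\<Sum>a | F a = F a0. \<Sum>b\<in>{b0}. r a * q (X a) b)"
    unfolding prob_of_def sum.cartesian_product by (simp add: split_beta)
  also have "\<dots> = (\<Sum>a | F a = F a0. r a * q (X a0) b0)"
  proof (rule sum.cong)
    show "(\<Sum>b\<in>{b0}. r a * q (X a) b) = r a * q (X a0) b0" if "a \<in> {a. F a = F a0}" for a
      using assms[of a a0] that by simp
  qed simp
  finally show ?thesis by (subst sum_distrib_left) (simp add: mult.commute)
qed

lemma entropy_add_channel_output:
  fixes r :: "'a::finite \<Rightarrow> real" and q :: "'x \<Rightarrow> 'b::finite \<Rightarrow> real"
  assumes r_nonneg: "\<And>a. 0 \<le> r a" and q: "is_channel q"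
    and determines: "\<And>a a'. F a = F a' \<Longrightarrow> X a = X a'"
  defines "P \<equiv> \<lambda>z. r (fst z) * q (X (fst z)) (snd z)"
  shows "entropy P (\<lambda>z. (F (fst z), snd z))
       = entropy P (\<lambda>z. F (fst z)) - (\<Sum>z\<in>UNIV. P z * log 2 (q (X (fst z)) (snd z)))"
proof -
  have P_nonneg: "0 \<le> P z" for z
    using r_nonneg q by (auto simp: P_def is_channel_def split: prod.splits)
  have "P z * log 2 (point_prob P (\<lambda>z. (F (fst z), snd z)) z)
      = P z * log 2 (point_prob P (\<lambda>z. F (fst z)) z) + P z * log 2 (q (X (fst z)) (snd z))" for z
  proof (cases "P z = 0")
    case False
    obtain a b where z: "z = (a, b)" by fastforce
    have "point_prob P (\<lambda>z. (F (fst z), snd z)) z = q (X a) b * point_prob P (\<lambda>z. F (fst z)) z"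
      unfolding point_prob_def P_def z
      using prob_of_channel_input_output[where F = F and X = X, OF determines]
      by (simp add: prob_of_channel_input[OF q])
    moreover have "0 < q (X a) b"
      using False r_nonneg[of a] q by (auto simp: P_def z is_channel_def less_le)
    moreover have "0 < point_prob P (\<lambda>z. F (fst z)) z"
      using False P_nonneg[of z] point_prob_ge[where P = P and w = z and f = "\<lambda>z. F (fst z)", OF P_nonneg]
      by linarith
    ultimately show ?thesis by (simp add: z log_mult distrib_left)
  qed simp
  then show ?thesis by (simp add: entropy_eq_sum_point_prob sum.distrib)
qed

definition channel_entropy ::
  "('w::finite \<Rightarrow> real) \<Rightarrow> ('x \<Rightarrow> 'u \<Rightarrow> real) \<Rightarrow> ('w \<Rightarrow> 'x) \<Rightarrow> ('w \<Rightarrow> 'u) \<Rightarrow> real" where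
  "channel_entropy P q X U = - (\<Sum>w\<in>UNIV. P w * log 2 (q (X w) (U w)))"

lemma entropy_add_channel_output_reindex:
  fixes P :: "'w::finite \<Rightarrow> real" and \<beta> :: "'a::finite \<times> 'b::finite \<Rightarrow> 'w"
    and r :: "'a \<Rightarrow> real" and q :: "'x \<Rightarrow> 'b \<Rightarrow> real"
  assumes "bij \<beta>" and "\<And>a. 0 \<le> r a" and "is_channel q"
    and factor: "\<And>a b. P (\<beta> (a, b)) = r a * q (\<xi> a) b"
    and U_\<beta>: "\<And>a b. U (\<beta> (a, b)) = b" and X_\<beta>: "\<And>a b. X (\<beta> (a, b)) = \<xi> a"
    and indep: "\<And>a b b'. F (\<beta> (a, b)) = F (\<beta> (a, b'))"
    and determines: "\<And>w w'. F w = F w' \<Longrightarrow> X w = X w'"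
  shows "entropy P (\<lambda>w. (F w, U w)) = entropy P F + channel_entropy P q X U"
proof -
  define G where "G a = F (\<beta> (a, undefined))" for a
  have F_\<beta>: "F (\<beta> z) = G (fst z)" for z
    using indep by (cases z) (simp add: G_def)
  have U_\<beta>z: "U (\<beta> z) = snd z" and X_\<beta>z: "X (\<beta> z) = \<xi> (fst z)" for z
    using U_\<beta> X_\<beta> by (cases z; simp)+
  have P_\<beta>z: "P (\<beta> z) = r (fst z) * q (\<xi> (fst z)) (snd z)" for z
    using factor by (cases z) simp
  then have P_\<beta>: "(\<lambda>z. P (\<beta> z)) = (\<lambda>z. r (fst z) * q (\<xi> (fst z)) (snd z))"
    by simp
  have G_determines: "\<xi> a = \<xi> a'" if "G a = G a'" for a a'
    using determines[OF that[unfolded G_def]] by (simp add: X_\<beta>)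
  have "entropy P (\<lambda>w. (F w, U w)) = entropy (\<lambda>z. P (\<beta> z)) (\<lambda>z. (G (fst z), snd z))"
    using entropy_bij_reindex[OF \<open>bij \<beta>\<close>, of P "\<lambda>w. (F w, U w)"]
    by (simp add: F_\<beta> U_\<beta>z)
  also have "\<dots> = entropy (\<lambda>z. P (\<beta> z)) (\<lambda>z. G (fst z))
      - (\<Sum>z\<in>UNIV. P (\<beta> z) * log 2 (q (\<xi> (fst z)) (snd z)))"
    using entropy_add_channel_output[where r = r and q = q and F = G and X = \<xi>,
        OF assms(2,3) G_determines]
    by (simp add: P_\<beta> P_\<beta>z)
  also have "entropy (\<lambda>z. P (\<beta> z)) (\<lambda>z. G (fst z)) = entropy P F"
    using entropy_bij_reindex[OF \<open>bij \<beta>\<close>, of P F] by (simp add: F_\<beta>)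
  also have "(\<Sum>z\<in>UNIV. P (\<beta> z) * log 2 (q (\<xi> (fst z)) (snd z)))
      = (\<Sum>w\<in>UNIV. P w * log 2 (q (X w) (U w)))"
    using sum.reindex_bij_betw[OF \<open>bij \<beta>\<close>, of "\<lambda>w. P w * log 2 (q (X w) (U w))"]
    by (simp add: X_\<beta>z U_\<beta>z)
  finally show ?thesis by (simp add: channel_entropy_def)
qed

section \<open>The sources and descriptions of the network\<close>

locale distributed_sources =
  fixes p :: "'x1::finite \<times> 'x2::finite \<times> 'x3::finite \<times> 'y::finite \<Rightarrow> real"
    and q1 :: "'x1 \<Rightarrow> 'u1::finite \<Rightarrow> real" and q2 :: "'x2 \<Rightarrow> 'u2::finite \<Rightarrow> real"
    and q3 :: "'x3 \<Rightarrow> 'u3::finite \<Rightarrow> real"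
  assumes p: "is_pmf p" and q1: "is_channel q1" and q2: "is_channel q2" and q3: "is_channel q3"
begin

abbreviation P :: "('x1, 'x2, 'x3, 'y, 'u1, 'u2, 'u3) omega \<Rightarrow> real" where
  "P \<equiv> jointP p q1 q2 q3"

lemma P_nonneg: "0 \<le> P w"
  using p q1 q2 q3 unfolding is_pmf_def is_channel_def jointP_def
  by (auto split: prod.splits)

lemma P_is_pmf: "is_pmf P"
proof -
  have "sum P UNIV = (\<Sum>x\<in>UNIV. \<Sum>u1\<in>UNIV. \<Sum>u2\<in>UNIV. \<Sum>u3\<in>UNIV. P (x, u1, u2, u3))"
    by (simp add: sum.cartesian_product)
  also have "\<dots> = (\<Sum>x\<in>UNIV. \<Sum>u1\<in>UNIV. \<Sum>u2\<in>UNIV. \<Sum>u3\<in>UNIV.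
      p x * q1 (fst x) u1 * q2 (fst (snd x)) u2 * q3 (fst (snd (snd x))) u3)"
    by (simp add: jointP_def split_beta)
  also have "\<dots> = (\<Sum>x\<in>UNIV. p x * sum (q1 (fst x)) UNIV * sum (q2 (fst (snd x))) UNIV
      * sum (q3 (fst (snd (snd x)))) UNIV)"
    by (simp add: sum_distrib_left[symmetric] sum_distrib_right[symmetric])
  also have "\<dots> = 1"
    using p q1 q2 q3 by (simp add: is_pmf_def is_channel_def)
  finally show ?thesis using P_nonneg by (simp add: is_pmf_def)
qed

lemma entropy_add_U1:
  assumes "\<And>x u1 u1' u2 u3. F (x, u1, u2, u3) = F (x, u1', u2, u3)"
    and "\<And>w w'. F w = F w' \<Longrightarrow> X1 w = X1 w'"
  shows "entropy P (\<lambda>w. (F w, U1 w)) = entropy P F + channel_entropy P q1 X1 U1"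
proof (rule entropy_add_channel_output_reindex[where \<beta> = "\<lambda>((x, u2, u3), u1). (x, u1, u2, u3)"
      and r = "\<lambda>(x, u2, u3). p x * q2 (fst (snd x)) u2 * q3 (fst (snd (snd x))) u3"
      and \<xi> = "\<lambda>a. fst (fst a)"])
  show "bij (\<lambda>((x, u2, u3), u1). (x, u1, u2, u3))"
    by (rule o_bij[where g = "\<lambda>(x, u1, u2, u3). ((x, u2, u3), u1)"]) (auto simp: fun_eq_iff)
  show "0 \<le> (\<lambda>(x, u2, u3). p x * q2 (fst (snd x)) u2 * q3 (fst (snd (snd x))) u3) a" for a
    using p q2 q3 by (auto simp: is_pmf_def is_channel_def split: prod.splits)
  show "F ((\<lambda>((x, u2, u3), u1). (x, u1, u2, u3)) (a, b))
      = F ((\<lambda>((x, u2, u3), u1). (x, u1, u2, u3)) (a, b'))" for a b b'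
    using assms(1) by (auto split: prod.splits)
  show "F w = F w' \<Longrightarrow> X1 w = X1 w'" for w w'
    by (rule assms(2))
qed (auto simp: q1 jointP_def X1_def U1_def)

lemma entropy_add_U2:
  assumes "\<And>x u1 u2 u2' u3. F (x, u1, u2, u3) = F (x, u1, u2', u3)"
    and "\<And>w w'. F w = F w' \<Longrightarrow> X2 w = X2 w'"
  shows "entropy P (\<lambda>w. (F w, U2 w)) = entropy P F + channel_entropy P q2 X2 U2"
proof (rule entropy_add_channel_output_reindex[where \<beta> = "\<lambda>((x, u1, u3), u2). (x, u1, u2, u3)"
      and r = "\<lambda>(x, u1, u3). p x * q1 (fst x) u1 * q3 (fst (snd (snd x))) u3"
      and \<xi> = "\<lambda>a. fst (snd (fst a))"])
  show "bij (\<lambda>((x, u1, u3), u2). (x, u1, u2, u3))"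
    by (rule o_bij[where g = "\<lambda>(x, u1, u2, u3). ((x, u1, u3), u2)"]) (auto simp: fun_eq_iff)
  show "0 \<le> (\<lambda>(x, u1, u3). p x * q1 (fst x) u1 * q3 (fst (snd (snd x))) u3) a" for a
    using p q1 q3 by (auto simp: is_pmf_def is_channel_def split: prod.splits)
  show "F ((\<lambda>((x, u1, u3), u2). (x, u1, u2, u3)) (a, b))
      = F ((\<lambda>((x, u1, u3), u2). (x, u1, u2, u3)) (a, b'))" for a b b'
    using assms(1) by (auto split: prod.splits)
  show "F w = F w' \<Longrightarrow> X2 w = X2 w'" for w w'
    by (rule assms(2))
qed (auto simp: q2 jointP_def mult_ac X2_def U2_def)

lemma entropy_add_U3:
  assumes "\<And>x u1 u2 u3 u3'. F (x, u1, u2, u3) = F (x, u1, u2, u3')"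
    and "\<And>w w'. F w = F w' \<Longrightarrow> X3 w = X3 w'"
  shows "entropy P (\<lambda>w. (F w, U3 w)) = entropy P F + channel_entropy P q3 X3 U3"
proof (rule entropy_add_channel_output_reindex[where \<beta> = "\<lambda>((x, u1, u2), u3). (x, u1, u2, u3)"
      and r = "\<lambda>(x, u1, u2). p x * q1 (fst x) u1 * q2 (fst (snd x)) u2"
      and \<xi> = "\<lambda>a. fst (snd (snd (fst a)))"])
  show "bij (\<lambda>((x, u1, u2), u3). (x, u1, u2, u3))"
    by (rule o_bij[where g = "\<lambda>(x, u1, u2, u3). ((x, u1, u2), u3)"]) (auto simp: fun_eq_iff)
  show "0 \<le> (\<lambda>(x, u1, u2). p x * q1 (fst x) u1 * q2 (fst (snd x)) u2) a" for a
    using p q1 q2 by (auto simp: is_pmf_def is_channel_def split: prod.splits)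
  show "F ((\<lambda>((x, u1, u2), u3). (x, u1, u2, u3)) (a, b))
      = F ((\<lambda>((x, u1, u2), u3). (x, u1, u2, u3)) (a, b'))" for a b b'
    using assms(1) by (auto split: prod.splits)
  show "F w = F w' \<Longrightarrow> X3 w = X3 w'" for w w'
    by (rule assms(2))
qed (auto simp: q3 jointP_def mult_ac X3_def U3_def)

lemmas coordinate_defs = X1_def X2_def X3_def U1_def U2_def U3_def

lemma mi_X123_U123:
  "mi P (\<lambda>w. (X1 w, X2 w, X3 w)) (\<lambda>w. (U1 w, U2 w, U3 w))
   = entropy P (\<lambda>w. (U1 w, U2 w, U3 w))
     - channel_entropy P q1 X1 U1 - channel_entropy P q2 X2 U2 - channel_entropy P q3 X3 U3"
proof -
  let ?X = "\<lambda>w. (X1 w, X2 w, X3 w)"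
  have "entropy P (\<lambda>w. (?X w, U1 w, U2 w, U3 w)) = entropy P (\<lambda>w. (((?X w, U1 w), U2 w), U3 w))"
    by (rule entropy_cong) auto
  also have "\<dots> = entropy P (\<lambda>w. ((?X w, U1 w), U2 w)) + channel_entropy P q3 X3 U3"
    by (rule entropy_add_U3) (auto simp: coordinate_defs)
  also have "entropy P (\<lambda>w. ((?X w, U1 w), U2 w)) = entropy P (\<lambda>w. (?X w, U1 w)) + channel_entropy P q2 X2 U2"
    by (rule entropy_add_U2) (auto simp: coordinate_defs)
  also have "entropy P (\<lambda>w. (?X w, U1 w)) = entropy P ?X + channel_entropy P q1 X1 U1"
    by (rule entropy_add_U1) (auto simp: coordinate_defs)
  finally show ?thesis by (simp add: mi_eq_entropy[OF P_is_pmf])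
qed

lemma cond_mi_X23_U23_given_U1:
  "cond_mi P (\<lambda>w. (X2 w, X3 w)) (\<lambda>w. (U2 w, U3 w)) U1
   = entropy P (\<lambda>w. (U1 w, U2 w, U3 w)) - entropy P U1
     - channel_entropy P q2 X2 U2 - channel_entropy P q3 X3 U3"
proof -
  let ?X = "\<lambda>w. (X2 w, X3 w)"
  have "entropy P (\<lambda>w. (?X w, (U2 w, U3 w), U1 w)) = entropy P (\<lambda>w. (((?X w, U1 w), U2 w), U3 w))"
    by (rule entropy_cong) auto
  also have "\<dots> = entropy P (\<lambda>w. ((?X w, U1 w), U2 w)) + channel_entropy P q3 X3 U3"
    by (rule entropy_add_U3) (auto simp: coordinate_defs)
  also have "entropy P (\<lambda>w. ((?X w, U1 w), U2 w)) = entropy P (\<lambda>w. (?X w, U1 w)) + channel_entropy P q2 X2 U2"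
    by (rule entropy_add_U2) (auto simp: coordinate_defs)
  moreover have "entropy P (\<lambda>w. ((U2 w, U3 w), U1 w)) = entropy P (\<lambda>w. (U1 w, U2 w, U3 w))"
    by (rule entropy_cong) auto
  ultimately show ?thesis by (simp add: cond_mi_def)
qed

lemma cond_mi_X13_U13_given_U2:
  "cond_mi P (\<lambda>w. (X1 w, X3 w)) (\<lambda>w. (U1 w, U3 w)) U2
   = entropy P (\<lambda>w. (U1 w, U2 w, U3 w)) - entropy P U2
     - channel_entropy P q1 X1 U1 - channel_entropy P q3 X3 U3"
proof -
  let ?X = "\<lambda>w. (X1 w, X3 w)"
  have "entropy P (\<lambda>w. (?X w, (U1 w, U3 w), U2 w)) = entropy P (\<lambda>w. (((?X w, U2 w), U1 w), U3 w))"
    by (rule entropy_cong) auto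
  also have "\<dots> = entropy P (\<lambda>w. ((?X w, U2 w), U1 w)) + channel_entropy P q3 X3 U3"
    by (rule entropy_add_U3) (auto simp: coordinate_defs)
  also have "entropy P (\<lambda>w. ((?X w, U2 w), U1 w)) = entropy P (\<lambda>w. (?X w, U2 w)) + channel_entropy P q1 X1 U1"
    by (rule entropy_add_U1) (auto simp: coordinate_defs)
  moreover have "entropy P (\<lambda>w. ((U1 w, U3 w), U2 w)) = entropy P (\<lambda>w. (U1 w, U2 w, U3 w))"
    by (rule entropy_cong) auto
  ultimately show ?thesis by (simp add: cond_mi_def)
qed

lemma cond_mi_X12_U12_given_U3:
  "cond_mi P (\<lambda>w. (X1 w, X2 w)) (\<lambda>w. (U1 w, U2 w)) U3
   = entropy P (\<lambda>w. (U1 w, U2 w, U3 w)) - entropy P U3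
     - channel_entropy P q1 X1 U1 - channel_entropy P q2 X2 U2"
proof -
  let ?X = "\<lambda>w. (X1 w, X2 w)"
  have "entropy P (\<lambda>w. (?X w, (U1 w, U2 w), U3 w)) = entropy P (\<lambda>w. (((?X w, U3 w), U1 w), U2 w))"
    by (rule entropy_cong) auto
  also have "\<dots> = entropy P (\<lambda>w. ((?X w, U3 w), U1 w)) + channel_entropy P q2 X2 U2"
    by (rule entropy_add_U2) (auto simp: coordinate_defs)
  also have "entropy P (\<lambda>w. ((?X w, U3 w), U1 w)) = entropy P (\<lambda>w. (?X w, U3 w)) + channel_entropy P q1 X1 U1"
    by (rule entropy_add_U1) (auto simp: coordinate_defs)
  moreover have "entropy P (\<lambda>w. ((U1 w, U2 w), U3 w)) = entropy P (\<lambda>w. (U1 w, U2 w, U3 w))"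
    by (rule entropy_cong) auto
  ultimately show ?thesis by (simp add: cond_mi_def)
qed

lemma cond_mi_U1_X1_given_U23:
  "cond_mi P U1 X1 (\<lambda>w. (U2 w, U3 w))
   = entropy P (\<lambda>w. (U1 w, U2 w, U3 w)) - entropy P (\<lambda>w. (U2 w, U3 w)) - channel_entropy P q1 X1 U1"
proof -
  have "entropy P (\<lambda>w. (U1 w, X1 w, U2 w, U3 w)) = entropy P (\<lambda>w. ((X1 w, U2 w, U3 w), U1 w))"
    by (rule entropy_cong) auto
  also have "\<dots> = entropy P (\<lambda>w. (X1 w, U2 w, U3 w)) + channel_entropy P q1 X1 U1"
    by (rule entropy_add_U1) (auto simp: coordinate_defs)
  finally show ?thesis by (simp add: cond_mi_def)
qed

lemma cond_mi_U2_X2_given_U13: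
  "cond_mi P U2 X2 (\<lambda>w. (U1 w, U3 w))
   = entropy P (\<lambda>w. (U1 w, U2 w, U3 w)) - entropy P (\<lambda>w. (U1 w, U3 w)) - channel_entropy P q2 X2 U2"
proof -
  have "entropy P (\<lambda>w. (U2 w, X2 w, U1 w, U3 w)) = entropy P (\<lambda>w. ((X2 w, U1 w, U3 w), U2 w))"
    by (rule entropy_cong) auto
  also have "\<dots> = entropy P (\<lambda>w. (X2 w, U1 w, U3 w)) + channel_entropy P q2 X2 U2"
    by (rule entropy_add_U2) (auto simp: coordinate_defs)
  moreover have "entropy P (\<lambda>w. (U2 w, U1 w, U3 w)) = entropy P (\<lambda>w. (U1 w, U2 w, U3 w))"
    by (rule entropy_cong) auto
  ultimately show ?thesis by (simp add: cond_mi_def)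
qed

lemma cond_mi_U3_X3_given_U12:
  "cond_mi P U3 X3 (\<lambda>w. (U1 w, U2 w))
   = entropy P (\<lambda>w. (U1 w, U2 w, U3 w)) - entropy P (\<lambda>w. (U1 w, U2 w)) - channel_entropy P q3 X3 U3"
proof -
  have "entropy P (\<lambda>w. (U3 w, X3 w, U1 w, U2 w)) = entropy P (\<lambda>w. ((X3 w, U1 w, U2 w), U3 w))"
    by (rule entropy_cong) auto
  also have "\<dots> = entropy P (\<lambda>w. (X3 w, U1 w, U2 w)) + channel_entropy P q3 X3 U3"
    by (rule entropy_add_U3) (auto simp: coordinate_defs)
  moreover have "entropy P (\<lambda>w. (U3 w, U1 w, U2 w)) = entropy P (\<lambda>w. (U1 w, U2 w, U3 w))"
    by (rule entropy_cong) auto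
  ultimately show ?thesis by (simp add: cond_mi_def)
qed

lemma mi_nonneg: "0 \<le> mi P A B"
  unfolding mi_def by (rule cond_mi_nonneg[OF P_nonneg])

lemma cond_mi_U1_X1_le:
  "cond_mi P U1 X1 (\<lambda>w. (U2 w, U3 w))
   \<le> mi P (\<lambda>w. (X1 w, X2 w, X3 w)) (\<lambda>w. (U1 w, U2 w, U3 w))
     - cond_mi P (\<lambda>w. (X2 w, X3 w)) (\<lambda>w. (U2 w, U3 w)) U1"
proof -
  have "0 \<le> entropy P U1 + entropy P (\<lambda>w. (U2 w, U3 w)) - entropy P (\<lambda>w. (U1 w, U2 w, U3 w))"
    using mi_nonneg[of U1 "\<lambda>w. (U2 w, U3 w)"] by (simp add: mi_eq_entropy[OF P_is_pmf])
  then show ?thesis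
    by (simp add: cond_mi_U1_X1_given_U23 mi_X123_U123 cond_mi_X23_U23_given_U1)
qed

lemma cond_mi_U2_X2_plus_U3_X3_le:
  "cond_mi P U2 X2 (\<lambda>w. (U1 w, U3 w)) + cond_mi P U3 X3 (\<lambda>w. (U1 w, U2 w))
   \<le> cond_mi P (\<lambda>w. (X2 w, X3 w)) (\<lambda>w. (U2 w, U3 w)) U1"
proof -
  have "entropy P (\<lambda>w. (U2 w, U1 w)) = entropy P (\<lambda>w. (U1 w, U2 w))"
    "entropy P (\<lambda>w. (U3 w, U1 w)) = entropy P (\<lambda>w. (U1 w, U3 w))"
    "entropy P (\<lambda>w. (U2 w, U3 w, U1 w)) = entropy P (\<lambda>w. (U1 w, U2 w, U3 w))"
    by (rule entropy_cong; auto)+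
  then have "0 \<le> entropy P (\<lambda>w. (U1 w, U2 w)) + entropy P (\<lambda>w. (U1 w, U3 w))
      - entropy P (\<lambda>w. (U1 w, U2 w, U3 w)) - entropy P U1"
    using cond_mi_nonneg[where P = P and A = U2 and B = U3 and C = U1, OF P_nonneg]
    by (simp add: cond_mi_def)
  then show ?thesis
    by (simp add: cond_mi_U2_X2_given_U13 cond_mi_U3_X3_given_U12 cond_mi_X23_U23_given_U1)
qed

lemma cond_mi_X13_U13_le:
  "cond_mi P (\<lambda>w. (X1 w, X3 w)) (\<lambda>w. (U1 w, U3 w)) U2
   \<le> mi P (\<lambda>w. (X1 w, X2 w, X3 w)) (\<lambda>w. (U1 w, U2 w, U3 w)) - cond_mi P U2 X2 (\<lambda>w. (U1 w, U3 w))"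
proof -
  have "entropy P (\<lambda>w. ((U1 w, U3 w), U2 w)) = entropy P (\<lambda>w. (U1 w, U2 w, U3 w))"
    by (rule entropy_cong) auto
  then have "0 \<le> entropy P (\<lambda>w. (U1 w, U3 w)) + entropy P U2 - entropy P (\<lambda>w. (U1 w, U2 w, U3 w))"
    using mi_nonneg[of "\<lambda>w. (U1 w, U3 w)" U2] by (simp add: mi_eq_entropy[OF P_is_pmf])
  then show ?thesis
    by (simp add: cond_mi_X13_U13_given_U2 mi_X123_U123 cond_mi_U2_X2_given_U13)
qed

lemma cond_mi_X12_U12_le:
  "cond_mi P (\<lambda>w. (X1 w, X2 w)) (\<lambda>w. (U1 w, U2 w)) U3
   \<le> mi P (\<lambda>w. (X1 w, X2 w, X3 w)) (\<lambda>w. (U1 w, U2 w, U3 w))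
     - cond_mi P (\<lambda>w. (X2 w, X3 w)) (\<lambda>w. (U2 w, U3 w)) U1 + cond_mi P U2 X2 (\<lambda>w. (U1 w, U3 w))"
proof -
  have "0 \<le> entropy P U1 + entropy P U3 - entropy P (\<lambda>w. (U1 w, U3 w))"
    using mi_nonneg[of U1 U3] by (simp add: mi_eq_entropy[OF P_is_pmf])
  then show ?thesis
    by (simp add: cond_mi_X12_U12_given_U3 mi_X123_U123 cond_mi_X23_U23_given_U1
        cond_mi_U2_X2_given_U13)
qed

lemma cond_i_iff_cond_ii: "cond_i P \<Delta> Csum \<longleftrightarrow> cond_ii P \<Delta> Csum"
proof
  assume "cond_i P \<Delta> Csum"
  then show "cond_ii P \<Delta> Csum"
    unfolding cond_i_def cond_ii_def by auto
next
  assume ii: "cond_ii P \<Delta> Csum"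
  define A where "A = mi P (\<lambda>w. (X1 w, X2 w, X3 w)) (\<lambda>w. (U1 w, U2 w, U3 w))"
  define B where "B = cond_mi P (\<lambda>w. (X2 w, X3 w)) (\<lambda>w. (U2 w, U3 w)) U1"
  define R2 where "R2 = cond_mi P U2 X2 (\<lambda>w. (U1 w, U3 w))"
  have bounds: "0 \<le> cond_mi P U1 X1 (\<lambda>w. (U2 w, U3 w))" "0 \<le> R2"
    "0 \<le> cond_mi P U3 X3 (\<lambda>w. (U1 w, U2 w))"
    "A + B \<le> Csum" "cond_mi P U1 X1 (\<lambda>w. (U2 w, U3 w)) \<le> A - B"
    "R2 + cond_mi P U3 X3 (\<lambda>w. (U1 w, U2 w)) \<le> B"
    "cond_mi P (\<lambda>w. (X1 w, X3 w)) (\<lambda>w. (U1 w, U3 w)) U2 \<le> A - R2"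
    "cond_mi P (\<lambda>w. (X1 w, X2 w)) (\<lambda>w. (U1 w, U2 w)) U3 \<le> A - B + R2"
    using cond_mi_nonneg[OF P_nonneg] ii cond_mi_U1_X1_le cond_mi_U2_X2_plus_U3_X3_le
      cond_mi_X13_U13_le cond_mi_X12_U12_le
    by (simp_all add: A_def B_def R2_def cond_ii_def)
  show "cond_i P \<Delta> Csum"
    unfolding cond_i_def
    by (rule conjI, use ii in \<open>simp add: cond_ii_def\<close>,
        rule exI[of _ "Csum - 2 * B"], rule exI[of _ R2], rule exI[of _ "B - R2"], rule exI[of _ B],
        rule exI[of _ "A - B"], rule exI[of _ R2], rule exI[of _ "B - R2"])
      (insert bounds, unfold A_def B_def R2_def, intro conjI; linarith)
qed

end

theorem mainTheorem2:
  fixes p :: "'x1::finite \<times> 'x2::finite \<times> 'x3::finite \<times> 'y::finite \<Rightarrow> real"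
  assumes "is_pmf p"
  shows "(\<forall>(q1::'x1 \<Rightarrow> 'u1::finite \<Rightarrow> real) (q2::'x2 \<Rightarrow> 'u2::finite \<Rightarrow> real)
            (q3::'x3 \<Rightarrow> 'u3::finite \<Rightarrow> real) \<Delta> Csum.
            is_channel q1 \<longrightarrow> is_channel q2 \<longrightarrow> is_channel q3 \<longrightarrow> 0 \<le> \<Delta> \<longrightarrow> 0 \<le> Csum \<longrightarrow>
            (cond_i (jointP p q1 q2 q3) \<Delta> Csum \<longleftrightarrow> cond_ii (jointP p q1 q2 q3) \<Delta> Csum))
       \<and> RI_sum p TYPE('u1) TYPE('u2) TYPE('u3) =
           {(\<Delta>, Csum). 0 \<le> \<Delta> \<and> 0 \<le> Csum \<and>
              (\<exists>(q1::'x1 \<Rightarrow> 'u1 \<Rightarrow> real) (q2::'x2 \<Rightarrow> 'u2 \<Rightarrow> real) (q3::'x3 \<Rightarrow> 'u3 \<Rightarrow> real).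
                 is_channel q1 \<and> is_channel q2 \<and> is_channel q3 \<and>
                 cond_ii (jointP p q1 q2 q3) \<Delta> Csum)}"
proof -
  have equivalence: "cond_i (jointP p q1 q2 q3) \<Delta> Csum \<longleftrightarrow> cond_ii (jointP p q1 q2 q3) \<Delta> Csum"
    if "is_channel q1" "is_channel q2" "is_channel q3"
    for q1 :: "'x1 \<Rightarrow> 'u1 \<Rightarrow> real" and q2 :: "'x2 \<Rightarrow> 'u2 \<Rightarrow> real"
      and q3 :: "'x3 \<Rightarrow> 'u3 \<Rightarrow> real" and \<Delta> Csum
    using distributed_sources.cond_i_iff_cond_ii[OF distributed_sources.intro[OF assms that]] .
  then show ?thesis
    unfolding RI_sum_def by blast
qed

end
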